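(* Let $G$ be a finite graph that admits a distinguishing edge coloring and has a non-identity automorphism. Then $$\theta'(G)=\max\{\,|\alpha|_e \;:\; \alpha\in\mathrm{Aut}(G)\setminus\{\mathrm{id}\}\,\}+1.$$
   Context: All graphs are finite and simple. An automorphism $\alpha$ of $G$ acts on edges by $\alpha(uv)=\alpha(u)\alpha(v)$. $|\alpha|_e$ denotes the number of cycles, including cycles of length 1 (fixed edges), in the cycle decomposition of the permutation that $\alpha$ induces on $E(G)$. An edge coloring with $k$ colors is a surjective map $c:E(G)\to\{1,\dots,k\}$. It is distinguishing if the only automorphism preserving all edge colors is the identity. $\theta'(G)$ is the least integer $k$ such that every edge coloring of $G$ using exactly $k$ colors is distinguishing. *)

theory Defs
  imports "HOL-Combinatorics.Permutations"
begin

definition simple_graph :: "'a set \<Rightarrow> 'a set set \<Rightarrow> bool" where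
  "simple_graph V E \<longleftrightarrow> finite V \<and>
     (\<forall>e\<in>E. \<exists>u v. u \<noteq> v \<and> u \<in> V \<and> v \<in> V \<and> e = {u, v})"

definition graph_aut :: "'a set \<Rightarrow> 'a set set \<Rightarrow> ('a \<Rightarrow> 'a) \<Rightarrow> bool" where
  "graph_aut V E f \<longleftrightarrow> f permutes V \<and>
     (\<forall>u\<in>V. \<forall>v\<in>V. {u, v} \<in> E \<longleftrightarrow> {f u, f v} \<in> E)"

definition edge_map :: "('a \<Rightarrow> 'a) \<Rightarrow> 'a set \<Rightarrow> 'a set" where
  "edge_map f e = f ` e"

definition num_cycles :: "('b \<Rightarrow> 'b) \<Rightarrow> 'b set \<Rightarrow> nat" where
  "num_cycles s S = card ((\<lambda>x. {(s ^^ n) x | n. True}) ` S)"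

definition edge_cycles :: "'a set set \<Rightarrow> ('a \<Rightarrow> 'a) \<Rightarrow> nat" where
  "edge_cycles E f = num_cycles (edge_map f) E"

definition edge_coloring :: "'a set set \<Rightarrow> nat \<Rightarrow> ('a set \<Rightarrow> nat) \<Rightarrow> bool" where
  "edge_coloring E k c \<longleftrightarrow> c ` E = {1..k}"

definition distinguishing :: "'a set \<Rightarrow> 'a set set \<Rightarrow> ('a set \<Rightarrow> nat) \<Rightarrow> bool" where
  "distinguishing V E c \<longleftrightarrow>
     (\<forall>f. graph_aut V E f \<and> (\<forall>e\<in>E. c (edge_map f e) = c e) \<longrightarrow> f = id)"

definition has_distinguishing_edge_coloring :: "'a set \<Rightarrow> 'a set set \<Rightarrow> bool" where
  "has_distinguishing_edge_coloring V E \<longleftrightarrow>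
     (\<exists>k c. edge_coloring E k c \<and> distinguishing V E c)"

definition theta' :: "'a set \<Rightarrow> 'a set set \<Rightarrow> nat" where
  "theta' V E = (LEAST k. 1 \<le> k \<and>
     (\<forall>c. edge_coloring E k c \<longrightarrow> distinguishing V E c))"

end

theory Submission
  imports Defs "HOL-Combinatorics.Cycles"
begin

text \<open>A coloring preserved by an automorphism \<alpha> is constant on the cycles of \<alpha> on E,
  so it uses at most |\<alpha>|_e colors; conversely every k with 1 \<le> k \<le> |\<alpha>|_e is the number
  of colors of some coloring that is constant on those cycles, and such a coloring is
  preserved by \<alpha>. Hence every coloring with k \<ge> 1 colors is distinguishing iff
  |\<alpha>|_e < k for every non-identity automorphism \<alpha>, and the least such k is the
  maximum of |\<alpha>|_e plus one.\<close>

definition forward_orbit :: "('b \<Rightarrow> 'b) \<Rightarrow> 'b \<Rightarrow> 'b set" where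
  "forward_orbit s x = {(s ^^ n) x | n. True}"

lemma num_cycles_eq_card_forward_orbits: "num_cycles s S = card (forward_orbit s ` S)"
  unfolding num_cycles_def forward_orbit_def ..

lemma self_in_forward_orbit: "x \<in> forward_orbit s x"
  unfolding forward_orbit_def by (metis (mono_tags) funpow_0 mem_Collect_eq)

lemma forward_orbit_apply:
  assumes "s ^^ N = id" "0 < N"
  shows "forward_orbit s (s x) = forward_orbit s x"
proof -
  have shift: "(s ^^ n) (s x) = (s ^^ Suc n) x" for n
    by (simp add: funpow_swap1)
  have "(s ^^ n) x = (s ^^ (n + N - 1)) (s x)" for n
    using assms by (simp add: shift funpow_add Suc_diff_1 del: funpow.simps)
  then show ?thesis
    unfolding forward_orbit_def using shift by blast
qed

lemma invariant_const_on_forward_orbit: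
  assumes "s ` S \<subseteq> S" "\<forall>x\<in>S. c (s x) = c x" "x \<in> S"
  shows "y \<in> forward_orbit s x \<Longrightarrow> c y = c x"
proof -
  have "(s ^^ n) x \<in> S \<and> c ((s ^^ n) x) = c x" for n
    using assms by (induction n) auto
  then show "y \<in> forward_orbit s x \<Longrightarrow> c y = c x"
    unfolding forward_orbit_def by blast
qed

lemma card_image_le_if_factors:
  assumes "finite S" "\<forall>x\<in>S. \<forall>y\<in>S. g x = g y \<longrightarrow> c x = c y"
  shows "card (c ` S) \<le> card (g ` S)"
proof -
  define h where "h X = c (SOME x. x \<in> S \<and> g x = X)" for X
  have "h (g x) = c x" if "x \<in> S" for x
    using someI[of "\<lambda>y. y \<in> S \<and> g y = g x" x] that assms(2) unfolding h_def by blast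
  then have "c ` S = h ` g ` S"
    by (auto simp: image_image)
  then show ?thesis
    using assms(1) by (simp add: card_image_le)
qed

lemma card_invariant_image_le_num_cycles:
  assumes "finite S" "s ` S \<subseteq> S" "\<forall>x\<in>S. c (s x) = c x"
  shows "card (c ` S) \<le> num_cycles s S"
  unfolding num_cycles_eq_card_forward_orbits
proof (rule card_image_le_if_factors[OF assms(1)], intro ballI impI)
  fix x y assume "x \<in> S" "y \<in> S" "forward_orbit s x = forward_orbit s y"
  then show "c x = c y"
    using invariant_const_on_forward_orbit[OF assms(2,3)] self_in_forward_orbit by metis
qed

lemma exists_surj_onto_initial_segment:
  assumes "finite T" "1 \<le> k" "k \<le> card T"
  shows "\<exists>h. h ` T = {1..k}"
proof -
  obtain b where b: "bij_betw b T {0..<card T}"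
    using ex_bij_betw_finite_nat[OF assms(1)] by (auto simp: atLeast0LessThan)
  define h where "h X = min (b X + 1) k" for X
  have "j \<in> h ` T" if "j \<in> {1..k}" for j
  proof -
    have "j - 1 \<in> b ` T"
      using that assms(3) b unfolding bij_betw_def by auto
    then obtain X where "X \<in> T" "b X = j - 1" by (metis imageE)
    then show ?thesis
      using that unfolding h_def by force
  qed
  moreover have "h ` T \<subseteq> {1..k}"
    using assms(2) unfolding h_def by auto
  ultimately show ?thesis by blast
qed

lemma finite_edges:
  assumes "simple_graph V E"
  shows "finite E"
proof (rule finite_subset)
  show "E \<subseteq> Pow V"
    using assms unfolding simple_graph_def by fastforce
  show "finite (Pow V)"
    using assms unfolding simple_graph_def by simp
qed

lemma finite_graph_auts: "simple_graph V E \<Longrightarrow> finite {f. graph_aut V E f}"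
  unfolding simple_graph_def graph_aut_def
  by (auto intro: finite_subset[OF _ finite_permutations])

lemma edge_map_in_edges:
  assumes "simple_graph V E" "graph_aut V E f" "e \<in> E"
  shows "edge_map f e \<in> E"
proof -
  obtain u v where "u \<in> V" "v \<in> V" "e = {u, v}"
    using assms(1,3) unfolding simple_graph_def by blast
  then show ?thesis
    using assms(2,3) unfolding graph_aut_def edge_map_def by auto
qed

lemma edge_map_periodic:
  assumes "simple_graph V E" "graph_aut V E f"
  obtains N where "edge_map f ^^ N = id" "0 < N"
proof -
  have "permutation f"
    using assms unfolding graph_aut_def simple_graph_def permutation_permutes by blast
  then obtain N where N: "f ^^ N = id" "0 < N"
    by (rule permutation_is_nilpotent)
  have "(edge_map f ^^ n) e = (f ^^ n) ` e" for n e
    by (induction n arbitrary: e) (auto simp: edge_map_def image_comp)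
  then have "edge_map f ^^ N = id"
    using N(1) by (simp add: fun_eq_iff)
  with N(2) show ?thesis
    using that by blast
qed

lemma preserved_coloring_le_edge_cycles:
  assumes "simple_graph V E" "graph_aut V E f" "edge_coloring E k c"
    and "\<forall>e\<in>E. c (edge_map f e) = c e"
  shows "k \<le> edge_cycles E f"
proof -
  have "card (c ` E) \<le> num_cycles (edge_map f) E"
    using assms finite_edges edge_map_in_edges
    by (intro card_invariant_image_le_num_cycles) auto
  then show ?thesis
    using assms(3) unfolding edge_coloring_def edge_cycles_def by simp
qed

lemma exists_preserved_coloring:
  assumes "simple_graph V E" "graph_aut V E f" "1 \<le> k" "k \<le> edge_cycles E f"
  shows "\<exists>c. edge_coloring E k c \<and> (\<forall>e\<in>E. c (edge_map f e) = c e)"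
proof -
  let ?orb = "forward_orbit (edge_map f)"
  obtain h where h: "h ` ?orb ` E = {1..k}"
    using exists_surj_onto_initial_segment[of "?orb ` E" k] assms(3,4) finite_edges[OF assms(1)]
    by (auto simp: edge_cycles_def num_cycles_eq_card_forward_orbits)
  obtain N where "edge_map f ^^ N = id" "0 < N"
    using edge_map_periodic[OF assms(1,2)] .
  then have "\<forall>e\<in>E. h (?orb (edge_map f e)) = h (?orb e)"
    by (simp add: forward_orbit_apply)
  moreover have "edge_coloring E k (h \<circ> ?orb)"
    using h unfolding edge_coloring_def by (simp add: image_comp)
  ultimately show ?thesis by auto
qed

lemma all_colorings_distinguishing_iff:
  assumes "simple_graph V E" "1 \<le> k"
  shows "(\<forall>c. edge_coloring E k c \<longrightarrow> distinguishing V E c)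
    \<longleftrightarrow> (\<forall>f. graph_aut V E f \<and> f \<noteq> id \<longrightarrow> edge_cycles E f < k)"
proof
  assume all: "\<forall>c. edge_coloring E k c \<longrightarrow> distinguishing V E c"
  show "\<forall>f. graph_aut V E f \<and> f \<noteq> id \<longrightarrow> edge_cycles E f < k"
  proof (intro allI impI, rule ccontr)
    fix f assume f: "graph_aut V E f \<and> f \<noteq> id" and "\<not> edge_cycles E f < k"
    then obtain c where "edge_coloring E k c" "\<forall>e\<in>E. c (edge_map f e) = c e"
      using exists_preserved_coloring[OF assms(1) _ assms(2)] by force
    then show False
      using all f unfolding distinguishing_def by blast
  qed
next
  assume "\<forall>f. graph_aut V E f \<and> f \<noteq> id \<longrightarrow> edge_cycles E f < k"
  then show "\<forall>c. edge_coloring E k c \<longrightarrow> distinguishing V E c"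
    unfolding distinguishing_def
    using preserved_coloring_le_edge_cycles[OF assms(1)] by (meson leD)
qed

theorem mainTheorem2:
  fixes V :: "'a set" and E :: "'a set set"
  assumes "simple_graph V E"
    and "has_distinguishing_edge_coloring V E"
    and "\<exists>f. graph_aut V E f \<and> f \<noteq> id"
  shows "theta' V E = Max {edge_cycles E f | f. graph_aut V E f \<and> f \<noteq> id} + 1"
proof -
  let ?M = "{edge_cycles E f | f. graph_aut V E f \<and> f \<noteq> id}"
  have "finite ?M"
    using finite_graph_auts[OF assms(1)] by (auto intro: finite_subset[of _ "edge_cycles E ` _"])
  moreover have "?M \<noteq> {}"
    using assms(3) by blast
  ultimately have "(\<forall>f. graph_aut V E f \<and> f \<noteq> id \<longrightarrow> edge_cycles E f < k) \<longleftrightarrow> Max ?M < k"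
    for k by (auto simp: Max_less_iff)
  then have "1 \<le> k \<and> (\<forall>c. edge_coloring E k c \<longrightarrow> distinguishing V E c) \<longleftrightarrow> Max ?M < k"
    for k using all_colorings_distinguishing_iff[OF assms(1), of k] by (cases "1 \<le> k") auto
  then have "theta' V E = (LEAST k. Max ?M < k)"
    unfolding theta'_def by presburger
  also have "\<dots> = Max ?M + 1"
    by (rule Least_equality) auto
  finally show ?thesis .
qed

end
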